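(* Let $\mathcal{AP}=\langle \Pi, E, \mathit{Hyp}, \mathit{Obs}\rangle$ be a Datalog abduction problem with $E\cap\mathit{Hyp}=\emptyset$. Define the instance $D=D^x\cup D^n$ with exogenous tuples $D^x:=E$ and endogenous tuples $D^n:=\mathit{Hyp}$, and the boolean Datalog query $\Pi':=\Pi\cup\{\mathit{ans}\leftarrow \mathit{Obs}\}$, where $\mathit{ans}$ is a fresh propositional atom. Then a hypothesis $h$ is relevant for $\mathcal{AP}$ (i.e. $h\in\mathit{Rel}(\mathcal{AP})$) if and only if $h$ is an actual cause for $\mathit{ans}$ with respect to $\Pi'$ and $D$.
   Context: A Datalog abduction problem $\langle\Pi,E,\mathit{Hyp},\mathit{Obs}\rangle$ consists of a finite set $\Pi$ of positive Datalog rules, a finite set $E$ of ground atoms whose predicates do not occur in rule heads, a finite set $\mathit{Hyp}$ of ground atoms (hypotheses) whose predicates do not occur in rule heads, and a finite conjunction $\mathit{Obs}$ of ground atoms, with $\Pi\cup E\cup\mathit{Hyp}\models\mathit{Obs}$ ($\models$ meaning membership in the minimal model). An abductive diagnosis is a subset-minimal $\Delta\subseteq\mathit{Hyp}$ with $\Pi\cup E\cup\Delta\models\mathit{Obs}$; $\mathit{Rel}(\mathcal{AP})$ is the set of hypotheses in some abductive diagnosis. A tuple $\tau\in D^n$ is an actual cause for $\mathit{ans}$ w.r.t. $\Pi'$ and $D$ if there is $\Gamma\subseteq D^n$ with $\Pi'\cup(D\smallsetminus\Gamma)\models\mathit{ans}$ and $\Pi'\cup(D\smallsetminus(\Gamma\cup\{\tau\}))\not\models\mathit{ans}$.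 *)

theory Defs
  imports Main
begin

datatype ('v, 'c) dterm = Var 'v | Const 'c

datatype ('p, 'v, 'c) atom = Atom 'p "('v, 'c) dterm list"
datatype ('p, 'c) gatom = GAtom 'p "'c list"

datatype ('p, 'v, 'c) rule = Rule "('p, 'v, 'c) atom" "('p, 'v, 'c) atom list"

fun apred :: "('p, 'v, 'c) atom \<Rightarrow> 'p" where
  "apred (Atom p ts) = p"

fun gpred :: "('p, 'c) gatom \<Rightarrow> 'p" where
  "gpred (GAtom p cs) = p"

fun head :: "('p, 'v, 'c) rule \<Rightarrow> ('p, 'v, 'c) atom" where
  "head (Rule h b) = h"

fun body :: "('p, 'v, 'c) rule \<Rightarrow> ('p, 'v, 'c) atom list" where
  "body (Rule h b) = b"

fun tvars :: "('v, 'c) dterm \<Rightarrow> 'v set" where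
  "tvars (Var v) = {v}"
| "tvars (Const c) = {}"

fun avars :: "('p, 'v, 'c) atom \<Rightarrow> 'v set" where
  "avars (Atom p ts) = (\<Union>t\<in>set ts. tvars t)"

definition safe_rule :: "('p, 'v, 'c) rule \<Rightarrow> bool" where
  "safe_rule r \<longleftrightarrow> avars (head r) \<subseteq> (\<Union>a\<in>set (body r). avars a)"

definition rule_preds :: "('p, 'v, 'c) rule \<Rightarrow> 'p set" where
  "rule_preds r = insert (apred (head r)) (apred ` set (body r))"

definition head_preds :: "('p, 'v, 'c) rule set \<Rightarrow> 'p set" where
  "head_preds \<Pi> = (apred \<circ> head) ` \<Pi>"

fun tinst :: "('v \<Rightarrow> 'c) \<Rightarrow> ('v, 'c) dterm \<Rightarrow> 'c" where
  "tinst \<sigma> (Var v) = \<sigma> v"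
| "tinst \<sigma> (Const c) = c"

fun ainst :: "('v \<Rightarrow> 'c) \<Rightarrow> ('p, 'v, 'c) atom \<Rightarrow> ('p, 'c) gatom" where
  "ainst \<sigma> (Atom p ts) = GAtom p (map (tinst \<sigma>) ts)"

fun of_gatom :: "('p, 'c) gatom \<Rightarrow> ('p, 'v, 'c) atom" where
  "of_gatom (GAtom p cs) = Atom p (map Const cs)"

inductive_set minmodel :: "('p, 'v, 'c) rule set \<Rightarrow> ('p, 'c) gatom set \<Rightarrow> ('p, 'c) gatom set"
  for \<Pi> F where
  fact: "a \<in> F \<Longrightarrow> a \<in> minmodel \<Pi> F"
| rule: "\<lbrakk> r \<in> \<Pi>; \<forall>b\<in>set (body r). ainst \<sigma> b \<in> minmodel \<Pi> F \<rbrakk>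
          \<Longrightarrow> ainst \<sigma> (head r) \<in> minmodel \<Pi> F"

definition entails :: "('p, 'v, 'c) rule set \<Rightarrow> ('p, 'c) gatom set \<Rightarrow> ('p, 'c) gatom \<Rightarrow> bool" where
  "entails \<Pi> F a \<longleftrightarrow> a \<in> minmodel \<Pi> F"

definition entails_all :: "('p, 'v, 'c) rule set \<Rightarrow> ('p, 'c) gatom set \<Rightarrow> ('p, 'c) gatom list \<Rightarrow> bool" where
  "entails_all \<Pi> F obs \<longleftrightarrow> (\<forall>a\<in>set obs. entails \<Pi> F a)"

definition abduction_problem ::
  "('p, 'v, 'c) rule set \<Rightarrow> ('p, 'c) gatom set \<Rightarrow> ('p, 'c) gatom set \<Rightarrow> ('p, 'c) gatom list \<Rightarrow> bool" where
  "abduction_problem \<Pi> E Hyp Obs \<longleftrightarrow>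
     finite \<Pi> \<and> (\<forall>r\<in>\<Pi>. safe_rule r) \<and> finite E \<and> finite Hyp \<and>
     gpred ` E \<inter> head_preds \<Pi> = {} \<and> gpred ` Hyp \<inter> head_preds \<Pi> = {} \<and>
     entails_all \<Pi> (E \<union> Hyp) Obs"

definition abductive_diagnosis ::
  "('p, 'v, 'c) rule set \<Rightarrow> ('p, 'c) gatom set \<Rightarrow> ('p, 'c) gatom set \<Rightarrow> ('p, 'c) gatom list
   \<Rightarrow> ('p, 'c) gatom set \<Rightarrow> bool" where
  "abductive_diagnosis \<Pi> E Hyp Obs \<Delta> \<longleftrightarrow>
     \<Delta> \<subseteq> Hyp \<and> entails_all \<Pi> (E \<union> \<Delta>) Obs \<and>
     (\<forall>\<Delta>'. \<Delta>' \<subset> \<Delta> \<longrightarrow> \<not> entails_all \<Pi> (E \<union> \<Delta>') Obs)"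

definition Rel ::
  "('p, 'v, 'c) rule set \<Rightarrow> ('p, 'c) gatom set \<Rightarrow> ('p, 'c) gatom set \<Rightarrow> ('p, 'c) gatom list
   \<Rightarrow> ('p, 'c) gatom set" where
  "Rel \<Pi> E Hyp Obs = {h. \<exists>\<Delta>. abductive_diagnosis \<Pi> E Hyp Obs \<Delta> \<and> h \<in> \<Delta>}"

definition actual_cause ::
  "('p, 'v, 'c) rule set \<Rightarrow> ('p, 'c) gatom set \<Rightarrow> ('p, 'c) gatom set \<Rightarrow> ('p, 'c) gatom
   \<Rightarrow> ('p, 'c) gatom \<Rightarrow> bool" where
  "actual_cause \<Pi>' Dx Dn ans \<tau> \<longleftrightarrow>
     \<tau> \<in> Dn \<and>
     (\<exists>\<Gamma>. \<Gamma> \<subseteq> Dn \<and> entails \<Pi>' ((Dx \<union> Dn) - \<Gamma>) ans \<and>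
           \<not> entails \<Pi>' ((Dx \<union> Dn) - (\<Gamma> \<union> {\<tau>})) ans)"

definition ans_rule :: "'p \<Rightarrow> ('p, 'c) gatom list \<Rightarrow> ('p, 'v, 'c) rule" where
  "ans_rule ansp Obs = Rule (Atom ansp []) (map of_gatom Obs)"

end

theory Submission
  imports Defs
begin

text \<open>Since the fresh atom ans is derivable from a set of facts exactly when all observations
  are, the actual-cause condition for h becomes: some set F = Hyp - \<Gamma> of hypotheses explains
  Obs while F - {h} does not. For a monotone property of finitely many hypotheses this holds
  iff h lies in a minimal explaining set: shrink F to a minimal explanation, which must
  contain h; conversely a minimal \<Delta> \<ni> h is itself such an F.\<close>

lemma minmodel_mono:
  assumes "P \<subseteq> Q" "F \<subseteq> G"
  shows "minmodel P F \<subseteq> minmodel Q G"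
proof
  fix a assume "a \<in> minmodel P F"
  then show "a \<in> minmodel Q G"
    by induction (use assms in \<open>auto intro: minmodel.intros\<close>)
qed

lemma entails_all_mono:
  "entails_all P F Obs \<Longrightarrow> F \<subseteq> G \<Longrightarrow> entails_all P G Obs"
  using minmodel_mono[of P P F G] by (auto simp: entails_all_def entails_def)

lemma ainst_of_gatom [simp]: "ainst \<sigma> (of_gatom g) = g"
  by (cases g) (simp add: comp_def)

lemma gpred_ainst [simp]: "gpred (ainst \<sigma> a) = apred a"
  by (cases a) simp

lemma minmodel_insert_ans_rule_cases:
  assumes "a \<in> minmodel (insert (ans_rule ansp Obs) P) F"
    and fresh_rules: "\<forall>r\<in>P. ansp \<notin> rule_preds r"
    and fresh_F: "ansp \<notin> gpred ` F"
    and fresh_Obs: "ansp \<notin> gpred ` set Obs"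
  shows "(a \<in> minmodel P F \<and> gpred a \<noteq> ansp) \<or> (a = GAtom ansp [] \<and> entails_all P F Obs)"
  using assms(1)
proof induction
  case (fact a)
  then show ?case using fresh_F by (auto intro: minmodel.fact)
next
  case (rule r \<sigma>)
  show ?case
  proof (cases "r = ans_rule ansp Obs")
    case True
    have "g \<in> minmodel P F" if g: "g \<in> set Obs" for g
    proof -
      have "gpred g \<noteq> ansp" using g fresh_Obs by blast
      moreover have "of_gatom g \<in> set (body r)" using True g by (simp add: ans_rule_def)
      ultimately show ?thesis using rule.IH by fastforce
    qed
    then show ?thesis using True by (simp add: ans_rule_def entails_all_def entails_def)
  next
    case False
    then have "r \<in> P" using rule.hyps by simp
    then have fresh_r: "ansp \<notin> rule_preds r" using fresh_rules by blast
    have "ainst \<sigma> b \<in> minmodel P F" if b: "b \<in> set (body r)" for b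
    proof -
      have "gpred (ainst \<sigma> b) \<noteq> ansp" using b fresh_r by (auto simp: rule_preds_def)
      moreover have "ainst \<sigma> b \<in> minmodel P F \<or> ainst \<sigma> b = GAtom ansp []"
        using b rule.IH by blast
      ultimately show ?thesis by (metis gpred.simps)
    qed
    then have "ainst \<sigma> (head r) \<in> minmodel P F" using \<open>r \<in> P\<close> by (blast intro: minmodel.rule)
    then show ?thesis using fresh_r by (auto simp: rule_preds_def)
  qed
qed

lemma entails_ans_rule_iff:
  fixes P :: "('p, 'v, 'c) rule set"
  assumes fresh_rules: "\<forall>r\<in>P. ansp \<notin> rule_preds r"
    and fresh_F: "ansp \<notin> gpred ` F"
    and fresh_Obs: "ansp \<notin> gpred ` set Obs"
  shows "entails (insert (ans_rule ansp Obs) P) F (GAtom ansp []) \<longleftrightarrow> entails_all P F Obs"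
proof
  assume "entails (insert (ans_rule ansp Obs) P) F (GAtom ansp [])"
  then show "entails_all P F Obs"
    using minmodel_insert_ans_rule_cases[OF _ assms] by (fastforce simp: entails_def)
next
  let ?P' = "insert (ans_rule ansp Obs :: ('p, 'v, 'c) rule) P"
  assume "entails_all P F Obs"
  \<comment> \<open>ans_rule is ground, so any substitution instantiates it\<close>
  then have "\<forall>b\<in>set (body (ans_rule ansp Obs :: ('p, 'v, 'c) rule)).
      ainst (\<lambda>_. undefined) b \<in> minmodel ?P' F"
    using minmodel_mono[of P ?P' F F] by (auto simp: ans_rule_def entails_all_def entails_def)
  then have "ainst (\<lambda>_. undefined) (head (ans_rule ansp Obs :: ('p, 'v, 'c) rule)) \<in> minmodel ?P' F"
    by (blast intro: minmodel.rule)
  then show "entails ?P' F (GAtom ansp [])"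
    by (simp add: ans_rule_def entails_def)
qed

lemma in_minimal_set_iff_critical:
  assumes "finite H"
    and mono: "\<And>A B. A \<subseteq> B \<Longrightarrow> Q A \<Longrightarrow> Q B"
  shows "(\<exists>\<Delta>\<subseteq>H. Q \<Delta> \<and> (\<forall>\<Delta>'. \<Delta>' \<subset> \<Delta> \<longrightarrow> \<not> Q \<Delta>') \<and> h \<in> \<Delta>) \<longleftrightarrow>
         (\<exists>\<Gamma>\<subseteq>H. Q (H - \<Gamma>) \<and> \<not> Q (H - \<Gamma> - {h}))"
proof
  assume "\<exists>\<Delta>\<subseteq>H. Q \<Delta> \<and> (\<forall>\<Delta>'. \<Delta>' \<subset> \<Delta> \<longrightarrow> \<not> Q \<Delta>') \<and> h \<in> \<Delta>"
  then obtain \<Delta> where "\<Delta> \<subseteq> H" "Q \<Delta>" "\<not> Q (\<Delta> - {h})" by blast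
  moreover have "H - (H - \<Delta>) = \<Delta>" using \<open>\<Delta> \<subseteq> H\<close> by blast
  ultimately show "\<exists>\<Gamma>\<subseteq>H. Q (H - \<Gamma>) \<and> \<not> Q (H - \<Gamma> - {h})"
    by (intro exI[of _ "H - \<Delta>"]) auto
next
  assume "\<exists>\<Gamma>\<subseteq>H. Q (H - \<Gamma>) \<and> \<not> Q (H - \<Gamma> - {h})"
  then obtain F where F: "F \<subseteq> H" "Q F" "\<not> Q (F - {h})" by blast
  have "finite {D. D \<subseteq> F \<and> Q D}" using F(1) \<open>finite H\<close> by (simp add: finite_subset)
  then obtain \<Delta> where \<Delta>: "\<Delta> \<subseteq> F" "Q \<Delta>" and min: "\<forall>D. D \<subseteq> \<Delta> \<longrightarrow> Q D \<longrightarrow> \<Delta> = D"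
    using finite_has_minimal2[of "{D. D \<subseteq> F \<and> Q D}" F] F(2) by auto
  have "h \<in> \<Delta>"
  proof (rule ccontr)
    assume "h \<notin> \<Delta>"
    then have "\<Delta> \<subseteq> F - {h}" using \<Delta>(1) by blast
    then show False using mono \<Delta>(2) F(3) by blast
  qed
  moreover have "\<forall>\<Delta>'. \<Delta>' \<subset> \<Delta> \<longrightarrow> \<not> Q \<Delta>'"
    using min by auto
  moreover have "\<Delta> \<subseteq> H" using \<Delta>(1) F(1) by (rule subset_trans)
  ultimately show "\<exists>\<Delta>\<subseteq>H. Q \<Delta> \<and> (\<forall>\<Delta>'. \<Delta>' \<subset> \<Delta> \<longrightarrow> \<not> Q \<Delta>') \<and> h \<in> \<Delta>"
    using \<Delta>(2) by blast
qed

lemma actual_cause_ans_rule_iff: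
  fixes \<Pi> :: "('p, 'v, 'c) rule set"
  assumes disj: "E \<inter> Hyp = {}"
    and fresh_rules: "\<forall>r\<in>\<Pi>. ansp \<notin> rule_preds r"
    and fresh_E: "ansp \<notin> gpred ` E"
    and fresh_Hyp: "ansp \<notin> gpred ` Hyp"
    and fresh_Obs: "ansp \<notin> gpred ` set Obs"
  shows "actual_cause (insert (ans_rule ansp Obs) \<Pi>) E Hyp (GAtom ansp []) h \<longleftrightarrow>
         h \<in> Hyp \<and> (\<exists>\<Gamma>\<subseteq>Hyp. entails_all \<Pi> (E \<union> (Hyp - \<Gamma>)) Obs \<and>
                            \<not> entails_all \<Pi> (E \<union> (Hyp - \<Gamma> - {h})) Obs)"
proof -
  have removal: "entails (insert (ans_rule ansp Obs) \<Pi>) ((E \<union> Hyp) - X) (GAtom ansp [])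
                   \<longleftrightarrow> entails_all \<Pi> (E \<union> (Hyp - X)) Obs" if "X \<subseteq> Hyp" for X
  proof -
    have "(E \<union> Hyp) - X = E \<union> (Hyp - X)" using that disj by blast
    moreover have "ansp \<notin> gpred ` (E \<union> (Hyp - X))" using fresh_E fresh_Hyp by blast
    ultimately show ?thesis using entails_ans_rule_iff[OF fresh_rules _ fresh_Obs] by simp
  qed
  have removal_h: "entails (insert (ans_rule ansp Obs) \<Pi>) ((E \<union> Hyp) - (\<Gamma> \<union> {h})) (GAtom ansp [])
                     \<longleftrightarrow> entails_all \<Pi> (E \<union> (Hyp - \<Gamma> - {h})) Obs" if "\<Gamma> \<subseteq> Hyp" "h \<in> Hyp" for \<Gamma>
  proof -
    have "Hyp - (\<Gamma> \<union> {h}) = Hyp - \<Gamma> - {h}" by blast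
    then show ?thesis using removal[of "\<Gamma> \<union> {h}"] that by simp
  qed
  show ?thesis
    unfolding actual_cause_def using removal removal_h by blast
qed

theorem proposition4:
  fixes \<Pi> :: "('p, 'v, 'c) rule set"
    and E Hyp :: "('p, 'c) gatom set"
    and Obs :: "('p, 'c) gatom list"
    and ansp :: 'p
    and h :: "('p, 'c) gatom"
  assumes AP: "abduction_problem \<Pi> E Hyp Obs"
    and disj: "E \<inter> Hyp = {}"
    and fresh_rules: "\<forall>r\<in>\<Pi>. ansp \<notin> rule_preds r"
    and fresh_E: "ansp \<notin> gpred ` E"
    and fresh_Hyp: "ansp \<notin> gpred ` Hyp"
    and fresh_Obs: "ansp \<notin> gpred ` set Obs"
    and hyp: "h \<in> Hyp"
  shows "h \<in> Rel \<Pi> E Hyp Obs \<longleftrightarrow>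
         actual_cause (insert (ans_rule ansp Obs) \<Pi>) E Hyp (GAtom ansp []) h"
proof -
  let ?explains = "\<lambda>\<Delta>. entails_all \<Pi> (E \<union> \<Delta>) Obs"
  have "finite Hyp" using AP by (simp add: abduction_problem_def)
  moreover have "\<And>A B. A \<subseteq> B \<Longrightarrow> ?explains A \<Longrightarrow> ?explains B"
    by (erule entails_all_mono) blast
  ultimately have "h \<in> Rel \<Pi> E Hyp Obs \<longleftrightarrow>
      (\<exists>\<Gamma>\<subseteq>Hyp. ?explains (Hyp - \<Gamma>) \<and> \<not> ?explains (Hyp - \<Gamma> - {h}))"
    unfolding Rel_def abductive_diagnosis_def
    using in_minimal_set_iff_critical[of Hyp ?explains h] by blast
  also have "\<dots> \<longleftrightarrow> actual_cause (insert (ans_rule ansp Obs) \<Pi>) E Hyp (GAtom ansp []) h"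
    using actual_cause_ans_rule_iff[OF disj fresh_rules fresh_E fresh_Hyp fresh_Obs] hyp by blast
  finally show ?thesis .
qed

end
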